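(* Let $q$ be a prime power, $k,m,t$ positive integers, and $V=\mathbb F_{q^m}^{k+1}$. Let $H$ be an $\mathbb F_{q^m}$-hyperplane of $V$ and let $W\subseteq H$ be an $\mathbb F_q$-subspace with $\dim_{\mathbb F_q}(W)=t$ which is a linear cutting blocking set in $H$ (i.e. $\langle W\rangle_{\mathbb F_{q^m}}=H$ and $\langle W\cap H'\rangle_{\mathbb F_{q^m}}=H'$ for every $\mathbb F_{q^m}$-hyperplane $H'$ of $H$). Let $v\in V\setminus H$. Then $U=W+\langle v\rangle_{\mathbb F_{q^m}}$ is a cutting $[t+m,k+1]_{q^m/q}$ system.
   Context: An $[n,k]_{q^m/q}$ system is an $\mathbb F_q$-subspace $U$ of $\mathbb F_{q^m}^k$ with $\dim_{\mathbb F_q}(U)=n$ and $\langle U\rangle_{\mathbb F_{q^m}}=\mathbb F_{q^m}^k$. It is cutting if for every $\mathbb F_{q^m}$-hyperplane $\Pi$ of the ambient space one has $\langle \Pi\cap U\rangle_{\mathbb F_{q^m}}=\Pi$. *)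

theory Defs
  imports "HOL-Analysis.Analysis" "HOL-Number_Theory.Prime_Powers"
begin

text \<open>Big field F_{q^m} is a finite field type 'K; the small field F_q is a subfield
  Fq of it. Vectors of 'K^{k+1} are 'K ^ 'n with CARD('n) = k+1.
  F_{q^m}-linear notions use the library interpretation vec (vec.span, vec.subspace, vec.dim).\<close>

definition is_subfield :: "'K::field set \<Rightarrow> bool" where
  "is_subfield F \<longleftrightarrow> 0 \<in> F \<and> 1 \<in> F \<and> (\<forall>a\<in>F. \<forall>b\<in>F. a + b \<in> F \<and> a * b \<in> F)
     \<and> (\<forall>a\<in>F. - a \<in> F) \<and> (\<forall>a\<in>F. a \<noteq> 0 \<longrightarrow> inverse a \<in> F)"

definition F_subspace :: "'K::field set \<Rightarrow> ('K ^ 'n) set \<Rightarrow> bool" where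
  "F_subspace F U \<longleftrightarrow> 0 \<in> U \<and> (\<forall>x\<in>U. \<forall>y\<in>U. x + y \<in> U) \<and> (\<forall>c\<in>F. \<forall>x\<in>U. c *s x \<in> U)"

definition F_span :: "'K::field set \<Rightarrow> ('K ^ 'n) set \<Rightarrow> ('K ^ 'n) set" where
  "F_span F S = {x. \<exists>T c. finite T \<and> T \<subseteq> S \<and> (\<forall>v\<in>T. c v \<in> F) \<and> x = (\<Sum>v\<in>T. c v *s v)}"

definition F_independent :: "'K::field set \<Rightarrow> ('K ^ 'n) set \<Rightarrow> bool" where
  "F_independent F B \<longleftrightarrow> finite B \<and>
     (\<forall>c. (\<forall>v\<in>B. c v \<in> F) \<longrightarrow> (\<Sum>v\<in>B. c v *s v) = 0 \<longrightarrow> (\<forall>v\<in>B. c v = 0))"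

definition F_dim_eq :: "'K::field set \<Rightarrow> ('K ^ 'n) set \<Rightarrow> nat \<Rightarrow> bool" where
  "F_dim_eq F U n \<longleftrightarrow> (\<exists>B. B \<subseteq> U \<and> F_independent F B \<and> F_span F B = U \<and> card B = n)"

definition hyperplane :: "('K::field ^ 'n) set \<Rightarrow> bool" where
  "hyperplane P \<longleftrightarrow> vec.subspace P \<and> vec.dim P = CARD('n) - 1"

definition hyperplane_of :: "('K::field ^ 'n) set \<Rightarrow> ('K ^ 'n) set \<Rightarrow> bool" where
  "hyperplane_of H P \<longleftrightarrow> vec.subspace P \<and> P \<subseteq> H \<and> vec.dim P = vec.dim H - 1"

text \<open>[n,k]_{q^m/q} system (k = CARD('n) is the ambient dimension).\<close>
definition is_system :: "'K::field set \<Rightarrow> nat \<Rightarrow> nat \<Rightarrow> ('K ^ 'n) set \<Rightarrow> bool" where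
  "is_system F n k U \<longleftrightarrow> CARD('n) = k \<and> F_subspace F U \<and> F_dim_eq F U n \<and> vec.span U = UNIV"

definition cutting :: "('K::field ^ 'n) set \<Rightarrow> bool" where
  "cutting U \<longleftrightarrow> (\<forall>P. hyperplane P \<longrightarrow> vec.span (P \<inter> U) = P)"

end

theory Submission
  imports Defs
begin

(* U is the direct sum of W and the line spanned by v, so |U| = q^t q^m; and an F_q-subspace of
   a finite F_{q^m}-space has an F_q-basis, hence its F_q-dimension is determined by its size.
   A hyperplane P other than H meets H in a hyperplane of H, which is spanned by the vectors
   of W it contains. P also contains a vector of U outside H (v itself, or w - c v for some
   w in W outside P), and that vector together with P \<inter> H spans P. *)

lemma is_subfield_diff: "is_subfield F \<Longrightarrow> a \<in> F \<Longrightarrow> b \<in> F \<Longrightarrow> a - b \<in> F"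
  unfolding is_subfield_def by (metis diff_conv_add_uminus)

lemma one_less_card_subfield:
  fixes F :: "'K::{field,finite} set"
  assumes "is_subfield F"
  shows "1 < card F"
proof -
  have "{0, 1} \<subseteq> F" using assms by (simp add: is_subfield_def)
  then have "card {0, 1 :: 'K} \<le> card F" by (rule card_mono[OF finite])
  then show ?thesis by simp
qed

lemma F_subspace_sum:
  assumes "F_subspace F U" "finite T" "\<forall>v\<in>T. c v \<in> F \<and> v \<in> U"
  shows "(\<Sum>v\<in>T. c v *s v) \<in> U"
  using assms(2,3)
  by (induction T rule: finite_induct) (use assms(1) in \<open>simp_all add: F_subspace_def\<close>)

lemma F_span_subset: "F_subspace F U \<Longrightarrow> B \<subseteq> U \<Longrightarrow> F_span F B \<subseteq> U"
  unfolding F_span_def using F_subspace_sum by blast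

lemma subset_F_span: "1 \<in> F \<Longrightarrow> B \<subseteq> F_span F B"
  unfolding F_span_def by (force intro: exI[of _ "\<lambda>_. 1"])

lemma F_spanI:
  "finite T \<Longrightarrow> T \<subseteq> B \<Longrightarrow> \<forall>v\<in>T. c v \<in> F \<Longrightarrow> (\<Sum>v\<in>T. c v *s v) \<in> F_span F B"
  unfolding F_span_def by blast

lemma F_independentD:
  "F_independent F B \<Longrightarrow> \<forall>v\<in>B. c v \<in> F \<Longrightarrow> (\<Sum>v\<in>B. c v *s v) = 0 \<Longrightarrow> v \<in> B \<Longrightarrow> c v = 0"
  unfolding F_independent_def by blast

lemma F_span_eq_image_PiE:
  assumes "finite B" "0 \<in> F"
  shows "F_span F B = (\<lambda>c. \<Sum>v\<in>B. c v *s v) ` (B \<rightarrow>\<^sub>E F)"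
proof (intro equalityI subsetI)
  fix x assume "x \<in> F_span F B"
  then obtain T c where T: "finite T" "T \<subseteq> B" "\<forall>v\<in>T. c v \<in> F" "x = (\<Sum>v\<in>T. c v *s v)"
    unfolding F_span_def by blast
  define d where "d = (\<lambda>v. if v \<in> T then c v else if v \<in> B then 0 else undefined)"
  have "(\<Sum>v\<in>B. d v *s v) = (\<Sum>v\<in>T. d v *s v)"
    by (rule sum.mono_neutral_right[OF assms(1) T(2)]) (simp add: d_def)
  also have "\<dots> = x" unfolding T(4) by (rule sum.cong) (simp_all add: d_def)
  finally show "x \<in> (\<lambda>c. \<Sum>v\<in>B. c v *s v) ` (B \<rightarrow>\<^sub>E F)"
    using T assms(2) by (intro image_eqI[of _ _ d]) (auto simp: d_def)
next
  fix x assume "x \<in> (\<lambda>c. \<Sum>v\<in>B. c v *s v) ` (B \<rightarrow>\<^sub>E F)"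
  then show "x \<in> F_span F B"
    unfolding F_span_def using assms(1) by (auto simp: PiE_iff)
qed

lemma inj_on_F_combination:
  assumes F: "is_subfield F" and ind: "F_independent F B"
  shows "inj_on (\<lambda>c. \<Sum>v\<in>B. c v *s v) (B \<rightarrow>\<^sub>E F)"
proof
  fix c d assume c: "c \<in> B \<rightarrow>\<^sub>E F" and d: "d \<in> B \<rightarrow>\<^sub>E F"
    and eq: "(\<Sum>v\<in>B. c v *s v) = (\<Sum>v\<in>B. d v *s v)"
  have "(\<Sum>v\<in>B. (c v - d v) *s v) = 0"
    using eq by (simp add: sum_subtractf vec.scale_left_diff_distrib)
  moreover have "\<forall>v\<in>B. c v - d v \<in> F"
    using c d is_subfield_diff[OF F] by (auto simp: PiE_iff)
  ultimately have "\<forall>v\<in>B. c v - d v = 0"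
    using F_independentD[OF ind, of "\<lambda>v. c v - d v"] by blast
  then show "c = d" using c d by (intro PiE_ext) auto
qed

lemma card_F_span:
  fixes B :: "('K::{field,finite} ^ 'n) set"
  assumes F: "is_subfield F" and ind: "F_independent F B"
  shows "card (F_span F B) = card F ^ card B"
proof -
  have "finite B" "0 \<in> F" using ind F by (simp_all add: F_independent_def is_subfield_def)
  then have "card (F_span F B) = card (B \<rightarrow>\<^sub>E F)"
    by (simp add: F_span_eq_image_PiE card_image[OF inj_on_F_combination[OF F ind]])
  also have "\<dots> = card F ^ card B" using \<open>finite B\<close> by (simp add: card_PiE)
  finally show ?thesis .
qed

lemma F_independent_insert:
  assumes F: "is_subfield F" and ind: "F_independent F B" and x: "x \<notin> F_span F B"
  shows "F_independent F (insert x B)"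
  unfolding F_independent_def
proof (intro conjI allI impI)
  have fin: "finite B" using ind by (simp add: F_independent_def)
  then show "finite (insert x B)" by simp
  have xB: "x \<notin> B" using x subset_F_span F by (auto simp: is_subfield_def)
  fix c assume cF: "\<forall>v\<in>insert x B. c v \<in> F" and s: "(\<Sum>v\<in>insert x B. c v *s v) = 0"
  then have sum_B: "c x *s x + (\<Sum>v\<in>B. c v *s v) = 0" using fin xB by simp
  have cx: "c x = 0"
  proof (rule ccontr)
    assume cx: "c x \<noteq> 0"
    have "x = inverse (c x) *s (c x *s x)" using cx by (simp add: vector_smult_assoc)
    also have "\<dots> = (\<Sum>v\<in>B. (- (inverse (c x) * c v)) *s v)"
      using sum_B by (simp add: eq_neg_iff_add_eq_0[symmetric] vec.scale_sum_right
          vector_smult_assoc sum_negf)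
    also have "\<dots> \<in> F_span F B"
      using cF cx F by (intro F_spanI[OF fin subset_refl]) (simp add: is_subfield_def)
    finally show False using x by blast
  qed
  then have "\<forall>v\<in>B. c v = 0"
    using sum_B cF F_independentD[OF ind, of c] by simp
  then show "\<forall>v\<in>insert x B. c v = 0" using cx by simp
qed

lemma F_subspace_has_basis:
  fixes U :: "('K::{field,finite} ^ 'n) set"
  assumes F: "is_subfield F" and U: "F_subspace F U"
  obtains B where "B \<subseteq> U" "F_independent F B" "F_span F B = U"
proof -
  let ?indep = "\<lambda>B. B \<subseteq> U \<and> F_independent F B"
  have "?indep {}" by (simp add: F_independent_def)
  moreover have "card B < CARD('K ^ 'n) + 1" for B :: "('K ^ 'n) set"
    using card_mono[OF finite subset_UNIV, of B] by simp
  ultimately obtain B where B: "?indep B" and max: "\<And>C. ?indep C \<Longrightarrow> card C \<le> card B"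
    using ex_has_greatest_nat[of ?indep "{}" card "CARD('K ^ 'n) + 1"] by metis
  have "U \<subseteq> F_span F B"
  proof
    fix x assume "x \<in> U"
    show "x \<in> F_span F B"
    proof (rule ccontr)
      assume x: "x \<notin> F_span F B"
      then have "x \<notin> B" using subset_F_span F by (auto simp: is_subfield_def)
      moreover have "finite B" using B by (simp add: F_independent_def)
      moreover have "?indep (insert x B)"
        using B \<open>x \<in> U\<close> F_independent_insert[OF F _ x] by simp
      ultimately show False using max[of "insert x B"] by simp
    qed
  qed
  then show thesis using that B F_span_subset[OF U] by blast
qed

lemma F_dim_eq_iff_card:
  fixes U :: "('K::{field,finite} ^ 'n) set"
  assumes F: "is_subfield F" and U: "F_subspace F U"
  shows "F_dim_eq F U d \<longleftrightarrow> card U = card F ^ d"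
proof
  assume "F_dim_eq F U d"
  then show "card U = card F ^ d"
    unfolding F_dim_eq_def using card_F_span[OF F] by blast
next
  assume card_U: "card U = card F ^ d"
  obtain B where B: "B \<subseteq> U" "F_independent F B" "F_span F B = U"
    using F_subspace_has_basis[OF F U] .
  have "card F ^ card B = card F ^ d" using card_F_span[OF F B(2)] B(3) card_U by simp
  then have "card B = d" using one_less_card_subfield[OF F] power_inject_exp by blast
  then show "F_dim_eq F U d" unfolding F_dim_eq_def using B by blast
qed

lemma F_subspace_set_plus:
  assumes A: "F_subspace F A" and B: "F_subspace F B"
  shows "F_subspace F {a + b | a b. a \<in> A \<and> b \<in> B}"
  unfolding F_subspace_def
proof (intro conjI ballI)
  have "0 + 0 \<in> {a + b | a b. a \<in> A \<and> b \<in> B}"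
    using A B unfolding F_subspace_def by blast
  then show "0 \<in> {a + b | a b. a \<in> A \<and> b \<in> B}" by simp
next
  fix x y assume "x \<in> {a + b | a b. a \<in> A \<and> b \<in> B}" "y \<in> {a + b | a b. a \<in> A \<and> b \<in> B}"
  then obtain a b a' b' where ab: "x = a + b" "y = a' + b'" "a \<in> A" "b \<in> B" "a' \<in> A" "b' \<in> B"
    by blast
  then have "(a + a') + (b + b') \<in> {a + b | a b. a \<in> A \<and> b \<in> B}"
    using A B unfolding F_subspace_def by blast
  then show "x + y \<in> {a + b | a b. a \<in> A \<and> b \<in> B}"
    by (simp add: ab algebra_simps)
next
  fix c x assume c: "c \<in> F" and "x \<in> {a + b | a b. a \<in> A \<and> b \<in> B}"
  then obtain a b where ab: "x = a + b" "a \<in> A" "b \<in> B" by blast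
  then have "c *s a + c *s b \<in> {a + b | a b. a \<in> A \<and> b \<in> B}"
    using A B c unfolding F_subspace_def by blast
  then show "c *s x \<in> {a + b | a b. a \<in> A \<and> b \<in> B}"
    by (simp add: ab vec.scale_right_distrib)
qed

lemma subset_set_plus_zero:
  fixes A B :: "'a::monoid_add set"
  assumes "0 \<in> B"
  shows "A \<subseteq> {a + b | a b. a \<in> A \<and> b \<in> B}"
proof
  fix a assume "a \<in> A"
  then have "a + 0 \<in> {a + b | a b. a \<in> A \<and> b \<in> B}" using assms by blast
  then show "a \<in> {a + b | a b. a \<in> A \<and> b \<in> B}" by simp
qed

lemma F_subspace_span: "F_subspace F (vec.span S)"
  by (simp add: F_subspace_def vec.span_zero vec.span_add vec.span_scale)

lemma card_span_singleton:
  fixes v :: "'K::{field,finite} ^ 'n"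
  assumes "v \<noteq> 0"
  shows "card (vec.span {v}) = CARD('K)"
proof -
  have "inj (\<lambda>c::'K. c *s v)" using assms by (auto intro: injI)
  then show ?thesis by (simp add: vec.span_singleton card_image)
qed

lemma subspace_Int_span_notin:
  assumes H: "vec.subspace H" and v: "v \<notin> H"
  shows "H \<inter> vec.span {v} = {0}"
proof -
  have "x = 0" if "x \<in> H" "x = c *s v" for x c
  proof (rule ccontr)
    assume "x \<noteq> 0"
    then have "v = inverse c *s x" using that(2) by (simp add: vector_smult_assoc)
    then show False using v vec.subspace_scale[OF H that(1)] by metis
  qed
  then show ?thesis using vec.subspace_0[OF H] by (auto simp: vec.span_singleton)
qed

lemma card_set_plus_span_notin:
  fixes H W :: "('K::{field,finite} ^ 'n) set"
  assumes H: "vec.subspace H" and WH: "W \<subseteq> H" and v: "v \<notin> H"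
  shows "card {w + u | w u. w \<in> W \<and> u \<in> vec.span {v}} = card W * CARD('K)"
proof -
  let ?L = "vec.span {v}"
  have sum_eq_image: "{w + u | w u. w \<in> W \<and> u \<in> ?L} = (\<lambda>(w, u). w + u) ` (W \<times> ?L)"
    by (auto intro!: image_eqI)
  have "inj_on (\<lambda>(w, u). w + u) (W \<times> ?L)"
  proof (rule inj_onI, clarify)
    fix w u w' u' assume "w \<in> W" "u \<in> ?L" "w' \<in> W" "u' \<in> ?L" and eq: "w + u = w' + u'"
    then have "w - w' \<in> H" using WH vec.subspace_diff[OF H] by blast
    moreover have "u' - u \<in> ?L" using \<open>u \<in> ?L\<close> \<open>u' \<in> ?L\<close> by (rule vec.span_diff[rotated])
    moreover have "w - w' = u' - u" using eq by (simp add: algebra_simps)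
    ultimately have "w - w' \<in> H \<inter> ?L" by simp
    then have "w = w'" unfolding subspace_Int_span_notin[OF H v] by simp
    then show "w = w' \<and> u = u'" using eq by simp
  qed
  then have "card {w + u | w u. w \<in> W \<and> u \<in> ?L} = card W * card ?L"
    unfolding sum_eq_image by (simp add: card_image card_cartesian_product)
  moreover have "v \<noteq> 0" using v vec.subspace_0[OF H] by auto
  ultimately show ?thesis using card_span_singleton by metis
qed

lemma span_insert_notin_hyperplane:
  fixes H :: "('K::field ^ 'n) set"
  assumes H: "hyperplane H" and v: "v \<notin> H"
  shows "vec.span (insert v H) = UNIV"
proof -
  have "vec.span H = H" using H by (simp add: hyperplane_def)
  have "vec.dim (insert v H) = vec.dim H + 1"
    using v by (simp add: vec.dim_insert \<open>vec.span H = H\<close>)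
  also have "\<dots> = CARD('n)" using H by (simp add: hyperplane_def)
  finally show ?thesis
    using vec.dim_eq_span[of "insert v H" UNIV] unfolding vec_dim_card by simp
qed

lemma hyperplane_eqI: "hyperplane P \<Longrightarrow> hyperplane H \<Longrightarrow> H \<subseteq> P \<Longrightarrow> H = P"
  unfolding hyperplane_def by (simp add: vec.subspace_dim_equal)

lemma hyperplane_of_Int_hyperplane:
  fixes P H :: "('K::field ^ 'n) set"
  assumes P: "hyperplane P" and H: "hyperplane H" and "P \<noteq> H"
  shows "hyperplane_of H (P \<inter> H)"
proof -
  have P_sub: "vec.subspace P" and H_sub: "vec.subspace H"
    using P H by (simp_all add: hyperplane_def)
  obtain u where "u \<in> P" "u \<notin> H"
    using hyperplane_eqI[OF H P] \<open>P \<noteq> H\<close> by blast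
  let ?sum = "{x + y | x y. x \<in> P \<and> y \<in> H}"
  have "insert u H \<subseteq> ?sum"
  proof -
    have "u + 0 \<in> ?sum" using \<open>u \<in> P\<close> vec.subspace_0[OF H_sub] by blast
    moreover have "0 + x \<in> ?sum" if "x \<in> H" for x using that vec.subspace_0[OF P_sub] by blast
    ultimately show ?thesis by auto
  qed
  then have "vec.span (insert u H) \<subseteq> ?sum"
    by (rule vec.span_minimal[OF _ vec.subspace_sums[OF P_sub H_sub]])
  then have "?sum = UNIV"
    using span_insert_notin_hyperplane[OF H \<open>u \<notin> H\<close>] by blast
  then have "vec.dim ?sum = CARD('n)" by (simp only: vec_dim_card)
  then have "CARD('n) + vec.dim (P \<inter> H) = vec.dim P + vec.dim H"
    using vec.dim_sums_Int[OF P_sub H_sub] by (simp only:)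
  moreover have "vec.dim P = CARD('n) - 1" "vec.dim H = CARD('n) - 1"
    using P H by (simp_all add: hyperplane_def)
  ultimately have "vec.dim (P \<inter> H) = vec.dim H - 1" by linarith
  then show ?thesis
    unfolding hyperplane_of_def using vec.subspace_inter[OF P_sub H_sub] by blast
qed

lemma hyperplane_meets_set_plus_span_outside:
  fixes P H W :: "('K::field ^ 'n) set"
  assumes P: "hyperplane P" and H: "hyperplane H" and "P \<noteq> H"
    and W: "vec.span W = H" "0 \<in> W" and v: "v \<notin> H"
  obtains u where "u \<in> P" "u \<in> {w + x | w x. w \<in> W \<and> x \<in> vec.span {v}}" "u \<notin> H"
proof (cases "v \<in> P")
  case True
  have "0 + v \<in> {w + x | w x. w \<in> W \<and> x \<in> vec.span {v}}"
    using W(2) vec.span_base[of v "{v}"] by blast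
  then show ?thesis using that True v by simp
next
  case False
  have P_span: "vec.span P = P" and H_sub: "vec.subspace H"
    using P H by (simp_all add: hyperplane_def)
  have "\<not> W \<subseteq> P"
  proof
    assume "W \<subseteq> P"
    then have "H \<subseteq> P" using W(1) P_span vec.span_mono by blast
    then show False using hyperplane_eqI[OF P H] \<open>P \<noteq> H\<close> by blast
  qed
  then obtain w where w: "w \<in> W" "w \<notin> P" by blast
  then have "w \<in> vec.span (insert v P)" using span_insert_notin_hyperplane[OF P False] by simp
  then obtain c where u: "w - c *s v \<in> P"
    using P_span by (auto simp: vec.span_breakdown_eq)
  have "w - c *s v \<notin> H"
  proof
    assume "w - c *s v \<in> H"
    moreover have "w \<in> H" using w(1) W(1) vec.span_base by blast
    ultimately have "w - (w - c *s v) \<in> H" using vec.subspace_diff[OF H_sub] by blast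
    then have "c *s v \<in> H" by simp
    then have "inverse c *s (c *s v) \<in> H" by (rule vec.subspace_scale[OF H_sub])
    moreover have "c \<noteq> 0" using u w(2) by auto
    ultimately show False using v by (simp add: vector_smult_assoc)
  qed
  moreover have "w + (- c) *s v \<in> {w + x | w x. w \<in> W \<and> x \<in> vec.span {v}}"
    using w(1) vec.span_scale[OF vec.span_base[of v "{v}"]] by blast
  ultimately show ?thesis using that u by simp
qed

lemma span_set_plus_span_notin_hyperplane:
  assumes H: "hyperplane H" and W: "vec.span W = H" "0 \<in> W" and v: "v \<notin> H"
  shows "vec.span {w + u | w u. w \<in> W \<and> u \<in> vec.span {v}} = UNIV"
proof -
  let ?U = "{w + u | w u. w \<in> W \<and> u \<in> vec.span {v}}"
  have "W \<subseteq> ?U" by (rule subset_set_plus_zero[OF vec.span_zero])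
  then have "H \<subseteq> vec.span ?U" using W(1) vec.span_mono by blast
  moreover have "0 + v \<in> ?U" using W(2) vec.span_base[of v "{v}"] by blast
  then have "v \<in> vec.span ?U" by (simp add: vec.span_base)
  ultimately have "insert v H \<subseteq> vec.span ?U" by blast
  then have "vec.span (insert v H) \<subseteq> vec.span ?U"
    using vec.span_minimal[OF _ vec.subspace_span] by blast
  then show ?thesis using span_insert_notin_hyperplane[OF H v] by blast
qed

lemma cutting_set_plus_span_notin_hyperplane:
  fixes H W :: "('K::field ^ 'n) set"
  assumes H: "hyperplane H" and W: "vec.span W = H" "0 \<in> W"
    and W_cutting: "\<forall>H'. hyperplane_of H H' \<longrightarrow> vec.span (W \<inter> H') = H'"
    and v: "v \<notin> H"
  shows "cutting {w + u | w u. w \<in> W \<and> u \<in> vec.span {v}}"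
  unfolding cutting_def
proof (intro allI impI)
  let ?U = "{w + u | w u. w \<in> W \<and> u \<in> vec.span {v}}"
  fix P :: "('K ^ 'n) set" assume P: "hyperplane P"
  have P_span: "vec.span P = P" using P by (simp add: hyperplane_def)
  have "vec.span (P \<inter> ?U) \<subseteq> P" using vec.span_mono[of "P \<inter> ?U" P] P_span by blast
  moreover have "P \<subseteq> vec.span (P \<inter> ?U)"
  proof (cases "P = H")
    case True
    have "W \<subseteq> P \<inter> ?U"
      using True W(1) vec.span_base subset_set_plus_zero[OF vec.span_zero] by blast
    then show ?thesis using True W(1) vec.span_mono by blast
  next
    case False
    obtain u where u: "u \<in> P" "u \<in> ?U" "u \<notin> H"
      using hyperplane_meets_set_plus_span_outside[OF P H False W v] .
    have PH: "hyperplane_of H (P \<inter> H)" by (rule hyperplane_of_Int_hyperplane[OF P H False])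
    let ?S = "insert u (W \<inter> (P \<inter> H))"
    have S_sub: "?S \<subseteq> P \<inter> ?U" using u subset_set_plus_zero[OF vec.span_zero] by blast
    have "vec.span (W \<inter> (P \<inter> H)) = P \<inter> H" using W_cutting PH by blast
    then have "vec.dim ?S = vec.dim (P \<inter> H) + 1"
      using u(3) vec.dim_insert[of u "W \<inter> (P \<inter> H)"] vec.dim_span[of "W \<inter> (P \<inter> H)"] by simp
    also have "\<dots> \<ge> vec.dim P" using PH P H by (simp add: hyperplane_of_def hyperplane_def)
    finally have "vec.span ?S = P"
      using vec.dim_eq_span[of ?S P] S_sub P_span by simp
    then show ?thesis using vec.span_mono[OF S_sub] by blast
  qed
  ultimately show "vec.span (P \<inter> ?U) = P" by blast
qed

theorem proposition3p7:
  fixes Fq :: "'K::{field,finite} set"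
    and q k m t :: nat
    and H W :: "('K ^ 'n) set"
    and v :: "'K ^ 'n"
  assumes "primepow q"
    and Fq: "is_subfield Fq" and card_Fq: "card Fq = q"
    and card_K: "CARD('K) = q ^ m"
    and "k > 0" and "m > 0" and "t > 0"
    and card_n: "CARD('n) = k + 1"
    and H: "hyperplane H"
    and W_H: "W \<subseteq> H" and W: "F_subspace Fq W" and dim_W: "F_dim_eq Fq W t"
    and span_W: "vec.span W = H"
    and W_cutting: "\<forall>H'. hyperplane_of H H' \<longrightarrow> vec.span (W \<inter> H') = H'"
    and v: "v \<notin> H"
  shows "is_system Fq (t + m) (k + 1) {w + u | w u. w \<in> W \<and> u \<in> vec.span {v}}
         \<and> cutting {w + u | w u. w \<in> W \<and> u \<in> vec.span {v}}"
proof -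
  let ?U = "{w + u | w u. w \<in> W \<and> u \<in> vec.span {v}}"
  have U: "F_subspace Fq ?U" by (rule F_subspace_set_plus[OF W F_subspace_span])
  have "0 \<in> W" using W by (simp add: F_subspace_def)
  have "card W = q ^ t" using dim_W F_dim_eq_iff_card[OF Fq W] card_Fq by simp
  then have "card ?U = q ^ (t + m)"
    using card_set_plus_span_notin[OF _ W_H v] H card_K by (simp add: hyperplane_def power_add)
  then have "F_dim_eq Fq ?U (t + m)" using F_dim_eq_iff_card[OF Fq U] card_Fq by simp
  moreover have "vec.span ?U = UNIV"
    by (rule span_set_plus_span_notin_hyperplane[OF H span_W \<open>0 \<in> W\<close> v])
  moreover have "cutting ?U"
    by (rule cutting_set_plus_span_notin_hyperplane[OF H span_W \<open>0 \<in> W\<close> W_cutting v])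
  ultimately show ?thesis using U card_n by (simp add: is_system_def)
qed

end
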